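(* Let $k\ge1$ and $b\ge 1$ be integers and $0\le t<k$. Then $$\sigma_{k}^{(b)}(t;1)=\frac{1}{k}\sigma_{k}^{(b)}(t;k)=\frac{1}{k}c_{k}(t).$$
   Context: For a positive integer $m$, $(q)_m=(1-q)\cdots(1-q^m)$, $(q)_0=1$. For integers $b\ge 0$, $k\ge1$ and $1\le s\le k$, let $R^{(b)}_{k,s}(q)=\sum_{t=0}^{k-1}\sigma^{(b)}_k(t;s)q^t$ be the remainder of $\frac{1}{k^b}(q)_{k-1}^{\,b}(q)_{s-1}$ upon division by $1-q^k$. $c_k(t)=\sum_{1\le h\le k,\ \gcd(h,k)=1}e^{2\pi i ht/k}$ is the Ramanujan sum. *)

theory Defs
  imports "HOL-Analysis.Analysis" "HOL-Computational_Algebra.Polynomial"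
begin

definition qpoch :: "nat \<Rightarrow> complex poly" where
  "qpoch m = (\<Prod>i\<in>{1..m}. [:1:] - monom 1 i)"

definition sigma :: "nat \<Rightarrow> nat \<Rightarrow> nat \<Rightarrow> nat \<Rightarrow> complex" where
  "sigma k b t s =
     coeff ((smult (1 / of_nat k ^ b) (qpoch (k - 1) ^ b * qpoch (s - 1)))
            mod ([:1:] - monom 1 k)) t"

definition ramanujan_sum :: "nat \<Rightarrow> nat \<Rightarrow> complex" where
  "ramanujan_sum k t =
     (\<Sum>h\<in>{h. 1 \<le> h \<and> h \<le> k \<and> gcd h k = 1}.
        exp (2 * of_real pi * \<i> * of_nat h * of_nat t / of_nat k))"

end

theory Submission
  imports Defs
begin

text \<open>Write \<zeta> = e^(2\<pi>i/k). A polynomial of degree below k is determined by its values at the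
  powers \<zeta>^j, and reduction modulo 1 - q^k does not change these values. If gcd(j,k) > 1, the order
  of \<zeta>^j is a proper divisor of k, so (q)_(k-1) vanishes at \<zeta>^j; otherwise \<zeta>^j is a primitive
  root and (q)_(k-1) takes the value \<Prod>_(0<i<k) (1 - \<zeta>^(ij)) = k, the value at q = 1 of
  (q^k - 1)/(q - 1). By orthogonality of the characters t \<mapsto> \<zeta>^(jt), the polynomial
  \<Sum>_(t<k) c_k(t) q^t takes the same value k [gcd(j,k) = 1] at \<zeta>^j. Hence, for every b \<ge> 1,
  R_(k,k) = \<Sum>_(t<k) c_k(t) q^t and R_(k,1) = (1/k) \<Sum>_(t<k) c_k(t) q^t.\<close>

definition unity_root :: "nat \<Rightarrow> nat \<Rightarrow> complex" where
  "unity_root k j = exp (2 * of_real pi * \<i> * of_nat j / of_nat k)"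

lemma unity_root_add: "unity_root k a * unity_root k b = unity_root k (a + b)"
  unfolding unity_root_def by (simp add: exp_add[symmetric] add_divide_distrib ring_distribs)

lemma unity_root_power: "unity_root k a ^ n = unity_root k (a * n)"
  unfolding unity_root_def exp_of_nat_mult[symmetric] by (simp add: algebra_simps)

lemma unity_root_eq_1_iff: "k \<ge> 1 \<Longrightarrow> unity_root k a = 1 \<longleftrightarrow> k dvd a"
  unfolding unity_root_def by (rule complex_root_unity_eq_1)

lemma unity_root_power_self: "k \<ge> 1 \<Longrightarrow> unity_root k a ^ k = 1"
  by (simp add: unity_root_power unity_root_eq_1_iff)

lemma sum_unity_root_mult:
  assumes "k \<ge> 1"
  shows "(\<Sum>t<k. unity_root k (m * t)) = (if k dvd m then of_nat k else 0)"
proof (cases "k dvd m")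
  case True
  then have "unity_root k (m * t) = 1" for t
    using assms by (simp add: unity_root_eq_1_iff)
  with True show ?thesis by simp
next
  case False
  then have "unity_root k m \<noteq> 1" using assms by (simp add: unity_root_eq_1_iff)
  then have "(\<Sum>t<k. unity_root k m ^ t) = (unity_root k m ^ k - 1) / (unity_root k m - 1)"
    by (rule geometric_sum)
  then show ?thesis using False assms by (simp add: unity_root_power unity_root_eq_1_iff)
qed

lemma poly_eqI_unity_roots:
  fixes p q :: "complex poly"
  assumes k: "k \<ge> 1" and "degree p < k" "degree q < k"
    and eq: "\<And>j. j < k \<Longrightarrow> poly p (unity_root k j) = poly q (unity_root k j)"
  shows "p = q"
proof (rule poly_eqI_degree[where A = "{z. z ^ k = 1}"])
  show "card {z::complex. z ^ k = 1} > degree p" "card {z::complex. z ^ k = 1} > degree q"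
    using assms card_roots_unity_eq[of k] by auto
  have "{z::complex. z ^ k = 1} = unity_root k ` {..<k}"
    using complex_roots_unity[OF k] unfolding unity_root_def by auto
  then show "poly p z = poly q z" if "z \<in> {z. z ^ k = 1}" for z
    using that eq by auto
qed

lemma degree_one_minus_monom: "degree ([:1:] - monom (1::'a::comm_ring_1) k) = k"
proof (cases "k = 0")
  case False
  have "[:1:] - monom (1::'a) k = monom (-1) k + [:1:]"
    by (rule poly_eqI) (simp add: coeff_monom)
  also have "degree \<dots> = k"
    using False by (subst degree_add_eq_left) (auto simp: degree_monom_eq)
  finally show ?thesis .
qed (simp add: one_pCons)

lemma mod_one_minus_monom_eqI:
  fixes F G :: "complex poly"
  assumes k: "k \<ge> 1" and "degree G < k"
    and eq: "\<And>j. j < k \<Longrightarrow> poly F (unity_root k j) = poly G (unity_root k j)"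
  shows "F mod ([:1:] - monom 1 k) = G"
proof (rule poly_eqI_unity_roots[OF k])
  have "[:1:] - monom (1::complex) k \<noteq> 0"
    using k degree_one_minus_monom[of k] by (metis degree_0 not_one_le_zero)
  then have "F mod ([:1:] - monom 1 k) = 0 \<or> degree (F mod ([:1:] - monom 1 k)) < k"
    using degree_mod_less[of "[:1:] - monom 1 k" F] by (simp add: degree_one_minus_monom)
  then show "degree (F mod ([:1:] - monom 1 k)) < k"
    using k by auto
  show "degree G < k" by fact
  fix j assume "j < k"
  have "poly ([:1:] - monom 1 k) (unity_root k j) = 0"
    using k by (simp add: poly_monom unity_root_power_self)
  then show "poly (F mod ([:1:] - monom 1 k)) (unity_root k j) = poly G (unity_root k j)"
    using eq[OF \<open>j < k\<close>] by (simp add: poly_mod)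
qed

lemma prod_one_minus_powers_primitive_root:
  fixes \<omega> :: "'a::idom"
  assumes k: "k \<ge> 1" and root: "\<omega> ^ k = 1"
    and primitive: "\<And>i. 0 < i \<Longrightarrow> i < k \<Longrightarrow> \<omega> ^ i \<noteq> 1"
  shows "(\<Prod>i\<in>{1..k-1}. 1 - \<omega> ^ i) = of_nat k"
proof -
  define H :: "'a poly" where "H = (\<Sum>i<k. monom 1 i)"
  define G :: "'a poly" where "G = (\<Prod>i\<in>{1..k-1}. [:- (\<omega> ^ i), 1:])"
  have coeff_H: "coeff H n = (if n < k then 1 else 0)" for n
    unfolding H_def by (simp add: coeff_sum coeff_monom)
  have degree_G: "degree G = k - 1"
    unfolding G_def by (subst degree_prod_sum_eq) auto
  have "inj_on (\<lambda>i. \<omega> ^ i) {1..k-1}"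
  proof (rule inj_onI)
    have "\<omega> \<noteq> 0" using root k by (metis power_0_left not_one_le_zero zero_neq_one)
    have "a = b" if "a \<in> {1..k-1}" "b \<in> {1..k-1}" "\<omega> ^ a = \<omega> ^ b" "a \<le> b" for a b
    proof -
      have "\<omega> ^ a * \<omega> ^ (b - a) = \<omega> ^ a * 1"
        using that(3,4) by (metis le_add_diff_inverse mult_1_right power_add)
      then have "\<omega> ^ (b - a) = 1" using \<open>\<omega> \<noteq> 0\<close> by simp
      moreover have "b - a < k" using that(2) k by auto
      ultimately show "a = b" using that(4) primitive[of "b - a"] by (cases "a = b") auto
    qed
    then show "a = b" if "a \<in> {1..k-1}" "b \<in> {1..k-1}" "\<omega> ^ a = \<omega> ^ b" for a b
      using that by (metis nat_le_linear)
  qed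
  txt \<open>Both H and G equal (X^k - 1)/(X - 1): monic of degree k - 1, vanishing at the \<omega>^i, 0 < i < k.\<close>
  have "H = G"
  proof (rule poly_eqI_degree_lead_coeff[where n = "k - 1" and A = "(\<lambda>i. \<omega> ^ i) ` {1..k-1}"])
    have "lead_coeff G = 1" unfolding G_def by (simp add: lead_coeff_prod)
    then show "coeff H (k - 1) = coeff G (k - 1)"
      using degree_G k by (simp add: coeff_H)
    show "card ((\<lambda>i. \<omega> ^ i) ` {1..k-1}) \<ge> k - 1"
      using \<open>inj_on _ _\<close> by (simp add: card_image)
    show "degree H \<le> k - 1" by (rule degree_le) (auto simp: coeff_H)
    show "degree G \<le> k - 1" using degree_G by simp
    fix z assume "z \<in> (\<lambda>i. \<omega> ^ i) ` {1..k-1}"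
    then obtain i where i: "i \<in> {1..k-1}" "z = \<omega> ^ i" by auto
    have "0 < i" "i < k" using i k by auto
    then have "z \<noteq> 1" using primitive i(2) by simp
    have "(z - 1) * poly H z = z ^ k - 1"
      unfolding H_def by (simp add: poly_sum poly_monom power_diff_1_eq)
    also have "\<dots> = 0"
      using root unfolding i(2) by (metis power_mult mult.commute power_one right_minus_eq)
    finally have "poly H z = 0" using \<open>z \<noteq> 1\<close> by simp
    moreover have "poly G z = 0" unfolding G_def poly_prod using i by (intro prod_zero) auto
    ultimately show "poly H z = poly G z" by simp
  qed
  then have "poly H 1 = poly G 1" by simp
  then show ?thesis unfolding H_def G_def by (simp add: poly_sum poly_monom poly_prod)
qed

lemma qpoch_0 [simp]: "qpoch 0 = 1"
  by (simp add: qpoch_def)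

lemma poly_qpoch: "poly (qpoch m) x = (\<Prod>i\<in>{1..m}. 1 - x ^ i)"
  unfolding qpoch_def poly_prod by (simp add: poly_monom)

lemma poly_qpoch_unity_root:
  assumes k: "k \<ge> 1"
  shows "poly (qpoch (k - 1)) (unity_root k j) = (if coprime j k then of_nat k else 0)"
proof (cases "coprime j k")
  case True
  have "unity_root k j ^ i \<noteq> 1" if "0 < i" "i < k" for i
  proof
    assume "unity_root k j ^ i = 1"
    then have "k dvd j * i" using k by (simp add: unity_root_power unity_root_eq_1_iff)
    then have "k dvd i" using True by (metis coprime_commute coprime_dvd_mult_right_iff)
    with that show False by (auto dest: dvd_imp_le)
  qed
  then have "(\<Prod>i\<in>{1..k-1}. 1 - unity_root k j ^ i) = of_nat k"
    using k by (intro prod_one_minus_powers_primitive_root) (simp_all add: unity_root_power_self)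
  with True show ?thesis by (simp add: poly_qpoch)
next
  case False
  define d where "d = k div gcd j k"
  have "gcd j k > 1" using False k
    by (metis coprime_iff_gcd_eq_1 gcd_pos_nat less_one nat_neq_iff not_one_le_zero)
  then have "1 \<le> d" "d < k"
    using k unfolding d_def
    by (auto simp: div_greater_zero_iff Suc_le_eq intro: dvd_imp_le div_less_dividend)
  moreover have "k dvd j * d"
    unfolding d_def by (metis dvd_div_mult dvd_mult_div_cancel dvd_triv_right gcd_dvd1 gcd_dvd2 mult.commute)
  then have "1 - unity_root k j ^ d = 0" using k by (simp add: unity_root_power unity_root_eq_1_iff)
  ultimately have "(\<Prod>i\<in>{1..k-1}. 1 - unity_root k j ^ i) = 0"
    by (intro prod_zero) auto
  with False show ?thesis by (simp add: poly_qpoch)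
qed

lemma ramanujan_sum_unity_root:
  "ramanujan_sum k t = (\<Sum>h\<in>{h. 1 \<le> h \<and> h \<le> k \<and> gcd h k = 1}. unity_root k (h * t))"
  unfolding ramanujan_sum_def unity_root_def by (simp add: mult.assoc)

definition ramanujan_poly :: "nat \<Rightarrow> complex poly" where
  "ramanujan_poly k = (\<Sum>t<k. monom (ramanujan_sum k t) t)"

lemma coeff_ramanujan_poly: "t < k \<Longrightarrow> coeff (ramanujan_poly k) t = ramanujan_sum k t"
  unfolding ramanujan_poly_def by (simp add: coeff_sum)

lemma degree_ramanujan_poly_less: "k \<ge> 1 \<Longrightarrow> degree (ramanujan_poly k) < k"
  using degree_le[of "k - 1" "ramanujan_poly k"] unfolding ramanujan_poly_def
  by (force simp: coeff_sum)

lemma poly_ramanujan_poly_unity_root: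
  assumes k: "k \<ge> 1" and j: "j < k"
  shows "poly (ramanujan_poly k) (unity_root k j) = (if coprime j k then of_nat k else 0)"
proof -
  define S where "S = {h. 1 \<le> h \<and> h \<le> k \<and> gcd h k = 1}"
  have "finite S" unfolding S_def by (rule finite_subset[of _ "{..k}"]) auto
  have "k dvd h + j \<longleftrightarrow> h = k - j" if "h \<in> S" for h
  proof
    assume "k dvd h + j"
    moreover have "0 < h + j" "h + j < 2 * k" using that j unfolding S_def by auto
    ultimately have "h + j = k" by (auto elim!: dvdE simp: less_2_cases_iff)
    then show "h = k - j" by simp
  qed (use j in simp)
  have "poly (ramanujan_poly k) (unity_root k j) = (\<Sum>t<k. ramanujan_sum k t * unity_root k j ^ t)"
    unfolding ramanujan_poly_def by (simp add: poly_sum poly_monom)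
  also have "\<dots> = (\<Sum>t<k. \<Sum>h\<in>S. unity_root k ((h + j) * t))"
    unfolding ramanujan_sum_unity_root S_def sum_distrib_right
    by (simp add: unity_root_power unity_root_add algebra_simps)
  also have "\<dots> = (\<Sum>h\<in>S. \<Sum>t<k. unity_root k ((h + j) * t))"
    by (rule sum.swap)
  also have "\<dots> = (\<Sum>h\<in>S. if h = k - j then of_nat k else 0)"
    using \<open>\<And>h. h \<in> S \<Longrightarrow> _\<close> by (intro sum.cong) (simp_all add: sum_unity_root_mult[OF k])
  also have "\<dots> = (if k - j \<in> S then of_nat k else 0)"
    using \<open>finite S\<close> by (simp add: sum.delta)
  also have "k - j \<in> S \<longleftrightarrow> coprime j k"
  proof -
    have "gcd (k - j) k = gcd j k"
      using j by (metis gcd.commute gcd_diff2_nat less_imp_le_nat)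
    then show ?thesis using j unfolding S_def by (auto simp: coprime_iff_gcd_eq_1)
  qed
  finally show ?thesis .
qed

theorem corollary2p6:
  fixes k b t :: nat
  assumes "k \<ge> 1" and "b \<ge> 1" and "t < k"
  shows "sigma k b t 1 = (1 / of_nat k) * sigma k b t k
       \<and> (1 / of_nat k) * sigma k b t k = (1 / of_nat k) * ramanujan_sum k t"
proof -
  note k = \<open>k \<ge> 1\<close>
  have "smult (1 / of_nat k ^ b) (qpoch (k - 1) ^ b * qpoch (1 - 1)) mod ([:1:] - monom 1 k)
      = smult (1 / of_nat k) (ramanujan_poly k)"
  proof (rule mod_one_minus_monom_eqI[OF k])
    show "degree (smult (1 / of_nat k) (ramanujan_poly k)) < k"
      using degree_ramanujan_poly_less[OF k] by (simp add: degree_smult_le le_less_trans)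
  qed (use k \<open>b \<ge> 1\<close> poly_qpoch_unity_root[OF k] in \<open>simp add: poly_ramanujan_poly_unity_root\<close>)
  moreover have "smult (1 / of_nat k ^ b) (qpoch (k - 1) ^ b * qpoch (k - 1)) mod ([:1:] - monom 1 k)
      = ramanujan_poly k"
    by (rule mod_one_minus_monom_eqI[OF k degree_ramanujan_poly_less[OF k]])
      (use k poly_qpoch_unity_root[OF k] in \<open>simp add: poly_ramanujan_poly_unity_root
                  power_Suc[symmetric] del: power_Suc\<close>)
  ultimately show ?thesis
    using coeff_ramanujan_poly[OF \<open>t < k\<close>] unfolding sigma_def by simp
qed

end
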